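(* For $i=1,\dots,n$ let $X_i=\{0,1,\dots,m_i-1\}$ and let $P_i$ be an irreducible stochastic matrix on $X_i$ in detailed balance with a strictly positive probability measure $\sigma_i$. Let $\{1,\dots,n\}=C\sqcup N$ with $N\neq\emptyset$, $i_1=\min N$, $p^0_1,\dots,p^0_n>0$ summing to $1$, and assume $P_k$ is symmetric for every $k>i_1$. Let $P$ be the first crested product (see context). For each $i$ let $U_i$ be a real $m_i\times m_i$ matrix, $\Delta_i$ a real diagonal matrix and $D_i=\mathrm{diag}(\sigma_i(0),\dots,\sigma_i(m_i-1))$ such that $P_iU_i=U_i\Delta_i$, $U_i^TD_iU_i=I$, the column of $U_i$ indexed by $0$ is the all-ones vector and $(\Delta_i)_{00}=1$. Put $M_i=I_i^{\sigma_i\text{-norm}}$ if $i\in N$ and $M_i=U_i$ if $i\in C$, and $$U=\sum_{k=i_1+1}^nM_1\otimes\cdots\otimes M_{k-1}\otimes(U_k-A_k)\otimes A_{k+1}\otimes\cdots\otimes A_n+U_1\otimes\cdots\otimes U_{i_1}\otimes A_{i_1+1}\otimes\cdots\otimes A_n,$$ $$D=\bigotimes_{i=1}^nD_i,\qquad \Delta=\sum_{i\in C}p^0_i(I_1\otimes\cdots\otimes\Delta_i\otimes\cdots\otimes I_n)+\sum_{i\in N}p^0_i(I_1\otimes\cdots\otimes I_{i-1}\otimes\Delta_i\otimes J^{\mathrm{diag}}_{i+1}\otimes\cdots\otimes J^{\mathrm{diag}}_n).$$ Then $D$ is the diagonal matrix of a probability measure in detailed balance with $P$, $\Delta$ is diagonal,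 and $PU=U\Delta$, $U^TDU=I$.
   Context: The first crested product is $P=\sum_{i\in C}p^0_i(I_1\otimes\cdots\otimes I_{i-1}\otimes P_i\otimes I_{i+1}\otimes\cdots\otimes I_n)+\sum_{i\in N}p^0_i(I_1\otimes\cdots\otimes I_{i-1}\otimes P_i\otimes J_{i+1}\otimes\cdots\otimes J_n)$, where $I_i$ is the $m_i\times m_i$ identity and $J_i$ is the $m_i\times m_i$ matrix with all entries $1/m_i$. Kronecker products are indexed lexicographically: $(A\otimes B)_{(x,x'),(y,y')}=A_{x,y}B_{x',y'}$. $I_i^{\sigma_i\text{-norm}}=\mathrm{diag}(\sigma_i(0)^{-1/2},\dots,\sigma_i(m_i-1)^{-1/2})$; $A_i$ is the $m_i\times m_i$ matrix whose column $0$ has all entries $1$ and all other entries $0$; $J^{\mathrm{diag}}_i=\mathrm{diag}(1,0,\dots,0)$ of size $m_i$. Detailed balance: $\sigma_i(x)p_i(x,y)=\sigma_i(y)p_i(y,x)$. *)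

theory Defs
  imports Complex_Main "HOL-Library.FuncSet"
begin

text \<open>Matrices on a finite index set X are represented as functions
  X \<Rightarrow> X \<Rightarrow> real (entries outside X are irrelevant).\<close>

type_synonym 'a rmat = "'a \<Rightarrow> 'a \<Rightarrow> real"

definition mmult :: "'a set \<Rightarrow> 'a rmat \<Rightarrow> 'a rmat \<Rightarrow> 'a rmat" where
  "mmult X A B = (\<lambda>x y. \<Sum>z\<in>X. A x z * B z y)"

definition mtrans :: "'a rmat \<Rightarrow> 'a rmat" where
  "mtrans A = (\<lambda>x y. A y x)"

definition idm :: "'a rmat" where
  "idm = (\<lambda>x y. if x = y then 1 else 0)"

definition diagm :: "('a \<Rightarrow> real) \<Rightarrow> 'a rmat" where
  "diagm s = (\<lambda>x y. if x = y then s x else 0)"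

fun mpow :: "'a set \<Rightarrow> 'a rmat \<Rightarrow> nat \<Rightarrow> 'a rmat" where
  "mpow X A 0 = idm"
| "mpow X A (Suc k) = mmult X (mpow X A k) A"

definition mat_eq_on :: "'a set \<Rightarrow> 'a rmat \<Rightarrow> 'a rmat \<Rightarrow> bool" where
  "mat_eq_on X A B \<longleftrightarrow> (\<forall>x\<in>X. \<forall>y\<in>X. A x y = B x y)"

definition stochastic :: "'a set \<Rightarrow> 'a rmat \<Rightarrow> bool" where
  "stochastic X P \<longleftrightarrow> (\<forall>x\<in>X. \<forall>y\<in>X. P x y \<ge> 0) \<and> (\<forall>x\<in>X. (\<Sum>y\<in>X. P x y) = 1)"

definition irreducible_mat :: "'a set \<Rightarrow> 'a rmat \<Rightarrow> bool" where
  "irreducible_mat X P \<longleftrightarrow> (\<forall>x\<in>X. \<forall>y\<in>X. \<exists>k. mpow X P k x y > 0)"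

definition prob_measure_on :: "'a set \<Rightarrow> ('a \<Rightarrow> real) \<Rightarrow> bool" where
  "prob_measure_on X s \<longleftrightarrow> (\<forall>x\<in>X. s x \<ge> 0) \<and> (\<Sum>x\<in>X. s x) = 1"

definition detailed_balance :: "'a set \<Rightarrow> ('a \<Rightarrow> real) \<Rightarrow> 'a rmat \<Rightarrow> bool" where
  "detailed_balance X s P \<longleftrightarrow> (\<forall>x\<in>X. \<forall>y\<in>X. s x * P x y = s y * P y x)"

definition is_diag_on :: "'a set \<Rightarrow> 'a rmat \<Rightarrow> bool" where
  "is_diag_on X A \<longleftrightarrow> (\<forall>x\<in>X. \<forall>y\<in>X. x \<noteq> y \<longrightarrow> A x y = 0)"

definition states :: "nat \<Rightarrow> (nat \<Rightarrow> nat) \<Rightarrow> (nat \<Rightarrow> nat) set" where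
  "states n m = PiE {1..n} (\<lambda>i. {..<m i})"

definition kron :: "nat \<Rightarrow> (nat \<Rightarrow> nat rmat) \<Rightarrow> (nat \<Rightarrow> nat) rmat" where
  "kron n Ms = (\<lambda>x y. \<Prod>i\<in>{1..n}. Ms i (x i) (y i))"

definition Jmat :: "nat \<Rightarrow> nat rmat" where
  "Jmat mi = (\<lambda>x y. 1 / real mi)"

definition Amat :: "nat rmat" where
  "Amat = (\<lambda>x y. if y = 0 then 1 else 0)"

definition Jdiag :: "nat rmat" where
  "Jdiag = (\<lambda>x y. if x = 0 \<and> y = 0 then 1 else 0)"

definition signorm :: "(nat \<Rightarrow> real) \<Rightarrow> nat rmat" where
  "signorm s = diagm (\<lambda>x. 1 / sqrt (s x))"

definition crested1 :: "nat \<Rightarrow> (nat \<Rightarrow> nat) \<Rightarrow> nat set \<Rightarrow> nat set \<Rightarrow> (nat \<Rightarrow> real)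
    \<Rightarrow> (nat \<Rightarrow> nat rmat) \<Rightarrow> (nat \<Rightarrow> nat) rmat" where
  "crested1 n m C N p0 P = (\<lambda>x y.
     (\<Sum>i\<in>C. p0 i * kron n (\<lambda>j. if j = i then P i else idm) x y)
   + (\<Sum>i\<in>N. p0 i * kron n (\<lambda>j. if j < i then idm else if j = i then P i else Jmat (m j)) x y))"

end

theory Submission
  imports Defs
begin

text \<open>Every column y of U is a pure tensor. Let L be the last coordinate beyond i1 at which y
  is nonzero (L = i1 if there is none); then column y is the product of the columns
  M_j(-, y_j) for j < L, U_L(-, y_L) at L and the constant 1 beyond L.
  Such tensors are orthonormal for the product measure D because their factors are, the
  column U_L(-, y_L) with y_L \<noteq> 0 being orthogonal to the constant column U_L(-, 0).
  Each summand of the crested product acts factorwise on such a tensor. For i \<in> N with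
  i < L the factor J_L kills it: P_L is symmetric and irreducible, so \<sigma>_L is uniform and
  orthogonality to constants becomes a zero column sum. In all other cases every factor is
  an eigenvector, which produces exactly the diagonal entry of \<Delta>. Detailed balance holds
  summandwise and factorwise, using once more that \<sigma>_j is uniform where J_j occurs.\<close>

section \<open>Matrices on a finite index set\<close>

lemma sum_eq_single:
  assumes "finite X" "w \<in> X" "\<And>z. z \<in> X \<Longrightarrow> z \<noteq> w \<Longrightarrow> g z = 0"
  shows "sum g X = g w"
  using assms by (subst sum.mono_neutral_right[of X "{w}"]) auto

lemma sum_idm_mult: "finite X \<Longrightarrow> x \<in> X \<Longrightarrow> (\<Sum>a\<in>X. idm x a * g a) = g x"
  unfolding idm_def by (subst sum_eq_single[of X x]) auto

lemma mmult_diag_right: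
  assumes "finite X" "is_diag_on X B" "y \<in> X"
  shows "mmult X A B x y = A x y * B y y"
  unfolding mmult_def using assms by (subst sum_eq_single[of X y]) (auto simp: is_diag_on_def)

lemma is_diag_on_idm: "is_diag_on X idm"
  by (simp add: is_diag_on_def idm_def)

lemma is_diag_on_Jdiag: "is_diag_on X Jdiag"
  by (simp add: is_diag_on_def Jdiag_def)

lemma is_diag_on_add:
  "is_diag_on X A \<Longrightarrow> is_diag_on X B \<Longrightarrow> is_diag_on X (\<lambda>x y. A x y + B x y)"
  by (simp add: is_diag_on_def)

lemma is_diag_on_lincomb:
  "(\<And>i. i \<in> I \<Longrightarrow> is_diag_on X (A i)) \<Longrightarrow> is_diag_on X (\<lambda>x y. \<Sum>i\<in>I. c i * A i x y)"
  by (simp add: is_diag_on_def)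

lemma detailed_balance_idm: "detailed_balance X s idm"
  by (simp add: detailed_balance_def idm_def)

lemma detailed_balance_Jmat:
  assumes "\<And>x y. x \<in> X \<Longrightarrow> y \<in> X \<Longrightarrow> s x = s y"
  shows "detailed_balance X s (Jmat k)"
  unfolding detailed_balance_def Jmat_def using assms by metis

lemma detailed_balance_add:
  "detailed_balance X s A \<Longrightarrow> detailed_balance X s B
   \<Longrightarrow> detailed_balance X s (\<lambda>x y. A x y + B x y)"
  by (simp add: detailed_balance_def distrib_left)

lemma detailed_balance_lincomb:
  "(\<And>i. i \<in> I \<Longrightarrow> detailed_balance X s (A i))
   \<Longrightarrow> detailed_balance X s (\<lambda>x y. \<Sum>i\<in>I. c i * A i x y)"
  by (simp add: detailed_balance_def sum_distrib_left mult.left_commute[of "s _"])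

definition weighted_inner :: "'a set \<Rightarrow> ('a \<Rightarrow> real) \<Rightarrow> ('a \<Rightarrow> real) \<Rightarrow> ('a \<Rightarrow> real) \<Rightarrow> real"
  where "weighted_inner X s g h = (\<Sum>a\<in>X. g a * s a * h a)"

lemma weighted_inner_commute: "weighted_inner X s g h = weighted_inner X s h g"
  unfolding weighted_inner_def by (simp add: mult_ac)

lemma weighted_inner_const_const:
  "prob_measure_on X s \<Longrightarrow> weighted_inner X s (\<lambda>_. 1) (\<lambda>_. 1) = 1"
  by (simp add: weighted_inner_def prob_measure_on_def)

definition orthonormal_cols :: "'a set \<Rightarrow> ('a \<Rightarrow> real) \<Rightarrow> 'a rmat \<Rightarrow> bool" where
  "orthonormal_cols X s A \<longleftrightarrow>
     (\<forall>b\<in>X. \<forall>b'\<in>X. weighted_inner X s (\<lambda>a. A a b) (\<lambda>a. A a b') = idm b b')"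

lemma mmult_gram_eq_weighted_inner:
  assumes "finite X" "mat_eq_on X D (diagm s)"
  shows "mmult X (mmult X (mtrans A) D) B x y = weighted_inner X s (\<lambda>z. A z x) (\<lambda>z. B z y)"
proof -
  have "mmult X (mtrans A) D x w = A w x * s w" if "w \<in> X" for w
    unfolding mmult_def mtrans_def using assms that
    by (subst sum_eq_single[of X w]) (auto simp: mat_eq_on_def diagm_def)
  then show ?thesis
    unfolding mmult_def[of X "mmult X (mtrans A) D"] weighted_inner_def by (intro sum.cong) auto
qed

lemma gram_eq_idm_iff_orthonormal_cols:
  assumes "finite X" "mat_eq_on X D (diagm s)"
  shows "mat_eq_on X (mmult X (mmult X (mtrans A) D) A) idm \<longleftrightarrow> orthonormal_cols X s A"
  using mmult_gram_eq_weighted_inner[OF assms] by (simp add: mat_eq_on_def orthonormal_cols_def)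

lemma orthonormal_cols_signorm:
  assumes "finite X" "\<forall>x\<in>X. s x > 0"
  shows "orthonormal_cols X s (signorm s)"
  unfolding orthonormal_cols_def
proof (intro ballI)
  fix b b' assume b: "b \<in> X" "b' \<in> X"
  have "s b > 0"
    using assms(2) b by blast
  have "weighted_inner X s (\<lambda>a. signorm s a b) (\<lambda>a. signorm s a b')
      = (if b = b' then 1 / sqrt (s b) * s b * (1 / sqrt (s b)) else 0)"
    unfolding weighted_inner_def signorm_def diagm_def using assms(1) b
    by (subst sum_eq_single[of X b]) auto
  also have "\<dots> = idm b b'"
    using \<open>s b > 0\<close> by (auto simp: idm_def)
  finally show "weighted_inner X s (\<lambda>a. signorm s a b) (\<lambda>a. signorm s a b') = idm b b'" .
qed

lemma orthonormal_cols_inner_const: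
  assumes "orthonormal_cols X s A" "c \<in> X" "\<forall>x\<in>X. A x c = 1" "b \<in> X"
  shows "weighted_inner X s (\<lambda>a. A a b) (\<lambda>_. 1) = idm b c"
proof -
  have "weighted_inner X s (\<lambda>a. A a b) (\<lambda>_. 1) = weighted_inner X s (\<lambda>a. A a b) (\<lambda>a. A a c)"
    unfolding weighted_inner_def using assms(3) by (intro sum.cong) auto
  with assms(1,2,4) show ?thesis by (simp add: orthonormal_cols_def)
qed

lemma orthonormal_cols_uniform_col_sum_eq_0:
  assumes "finite X" "orthonormal_cols X s A" "c \<in> X" "\<forall>x\<in>X. A x c = 1"
    and uniform: "\<forall>x\<in>X. s x = 1 / card X" and "b \<in> X" "b \<noteq> c"
  shows "(\<Sum>a\<in>X. A a b) = 0"
proof -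
  have "(\<Sum>a\<in>X. A a b) / card X = weighted_inner X s (\<lambda>a. A a b) (\<lambda>_. 1)"
    unfolding weighted_inner_def sum_divide_distrib using uniform by (intro sum.cong) auto
  also have "\<dots> = 0"
    using orthonormal_cols_inner_const[OF assms(2-4,6)] assms(7) by (simp add: idm_def)
  finally show ?thesis
    using assms(1,3) by (auto simp: card_gt_0_iff)
qed

section \<open>Reversible chains with a symmetric transition matrix\<close>

lemma mpow_nonneg:
  assumes "\<forall>x\<in>X. \<forall>y\<in>X. P x y \<ge> 0" "y \<in> X"
  shows "mpow X P k x y \<ge> 0"
  using assms(2)
  by (induction k arbitrary: y) (use assms(1) in \<open>auto simp: idm_def mmult_def intro!: sum_nonneg\<close>)

lemma mpow_pos_imp_eq:
  assumes nonneg: "\<forall>x\<in>X. \<forall>y\<in>X. P x y \<ge> 0"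
    and step: "\<forall>x\<in>X. \<forall>y\<in>X. P x y > 0 \<longrightarrow> f x = f y"
    and "x \<in> X" "y \<in> X" "mpow X P k x y > 0"
  shows "f x = f y"
  using assms(4,5)
proof (induction k arbitrary: y)
  case 0
  then show ?case by (simp add: idm_def split: if_splits)
next
  case (Suc k)
  have "\<not> (\<forall>z\<in>X. mpow X P k x z * P z y \<le> 0)"
    using Suc.prems(2) sum_nonpos[of X "\<lambda>z. mpow X P k x z * P z y"] by (auto simp: mmult_def)
  then obtain z where z: "z \<in> X" "mpow X P k x z * P z y > 0"
    by (auto simp: not_le)
  moreover have "mpow X P k x z \<ge> 0" "P z y \<ge> 0"
    using mpow_nonneg[OF nonneg] nonneg z(1) Suc.prems(1) by auto
  ultimately have "mpow X P k x z > 0" "P z y > 0"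
    by (auto simp: zero_less_mult_iff)
  then show ?case
    using Suc.IH[OF z(1)] step z(1) Suc.prems(1) by auto
qed

lemma symmetric_detailed_balance_uniform:
  assumes "finite X" "stochastic X P" "irreducible_mat X P"
    and symmetric: "\<forall>x\<in>X. \<forall>y\<in>X. P x y = P y x"
    and "detailed_balance X s P" "prob_measure_on X s" "x \<in> X"
  shows "s x = 1 / card X"
proof -
  have nonneg: "\<forall>x\<in>X. \<forall>y\<in>X. P x y \<ge> 0"
    using assms(2) by (simp add: stochastic_def)
  have step: "\<forall>a\<in>X. \<forall>b\<in>X. P a b > 0 \<longrightarrow> s a = s b"
  proof (intro ballI impI)
    fix a b assume ab: "a \<in> X" "b \<in> X" "P a b > 0"
    have "s a * P a b = s b * P b a"
      using assms(5) ab by (simp add: detailed_balance_def)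
    with ab symmetric show "s a = s b" by simp
  qed
  have const: "s y = s x" if y: "y \<in> X" for y
  proof -
    obtain k where "mpow X P k y x > 0"
      using assms(3,7) y by (auto simp: irreducible_mat_def)
    then show ?thesis
      using mpow_pos_imp_eq[OF nonneg step y assms(7)] by blast
  qed
  have "1 = (\<Sum>y\<in>X. s y)"
    using assms(6) by (simp add: prob_measure_on_def)
  also have "\<dots> = card X * s x"
    using const by simp
  finally have "card X * s x = 1" ..
  then show ?thesis
    by (cases "card X = 0") (simp_all add: eq_divide_eq mult.commute)
qed

section \<open>Kronecker products on the product state space\<close>

lemma finite_states: "finite (states n m)"
  by (simp add: states_def finite_PiE)

lemma states_memD: "z \<in> states n m \<Longrightarrow> i \<in> {1..n} \<Longrightarrow> z i < m i"
  by (auto simp: states_def PiE_def Pi_def)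

lemma states_neqE:
  assumes "z \<in> states n m" "w \<in> states n m" "z \<noteq> w"
  obtains i where "i \<in> {1..n}" "z i \<noteq> w i"
  using assms unfolding states_def using PiE_ext by blast

lemma sum_states_prod:
  "(\<Sum>z\<in>states n m. \<Prod>i\<in>{1..n}. g i (z i))
     = (\<Prod>i\<in>{1..n}. \<Sum>a<m i. (g i a :: 'a :: comm_semiring_1))"
  unfolding states_def by (rule prod_sum_PiE[symmetric]) auto

lemma kron_eq_0: "i \<in> {1..n} \<Longrightarrow> Ms i (x i) (y i) = 0 \<Longrightarrow> kron n Ms x y = 0"
  unfolding kron_def by (rule prod_zero) auto

lemma sum_kron_mult_tensor:
  "(\<Sum>z\<in>states n m. kron n Ms x z * (\<Prod>i\<in>{1..n}. g i (z i)))
     = (\<Prod>i\<in>{1..n}. \<Sum>a<m i. Ms i (x i) a * g i a)"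
  unfolding kron_def prod.distrib[symmetric] by (rule sum_states_prod)

lemma weighted_inner_tensor:
  "weighted_inner (states n m) (\<lambda>z. \<Prod>i\<in>{1..n}. s i (z i))
       (\<lambda>z. \<Prod>i\<in>{1..n}. g i (z i)) (\<lambda>z. \<Prod>i\<in>{1..n}. h i (z i))
     = (\<Prod>i\<in>{1..n}. weighted_inner {..<m i} (s i) (g i) (h i))"
  unfolding weighted_inner_def prod.distrib[symmetric] by (rule sum_states_prod)

lemma kron_diagm:
  "mat_eq_on (states n m) (kron n (\<lambda>i. diagm (s i))) (diagm (\<lambda>z. \<Prod>i\<in>{1..n}. s i (z i)))"
  unfolding mat_eq_on_def
proof (intro ballI)
  fix z w assume zw: "z \<in> states n m" "w \<in> states n m"
  show "kron n (\<lambda>i. diagm (s i)) z w = diagm (\<lambda>z. \<Prod>i\<in>{1..n}. s i (z i)) z w"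
  proof (cases "z = w")
    case False
    with zw obtain i where "i \<in> {1..n}" "z i \<noteq> w i" by (rule states_neqE)
    with False show ?thesis by (simp add: kron_eq_0 diagm_def)
  qed (simp add: kron_def diagm_def)
qed

lemma is_diag_on_kron:
  assumes "\<And>i. i \<in> {1..n} \<Longrightarrow> is_diag_on {..<m i} (Ms i)"
  shows "is_diag_on (states n m) (kron n Ms)"
  unfolding is_diag_on_def
proof (intro ballI impI)
  fix z w assume zw: "z \<in> states n m" "w \<in> states n m" "z \<noteq> w"
  then obtain i where i: "i \<in> {1..n}" "z i \<noteq> w i" by (rule states_neqE)
  then have "Ms i (z i) (w i) = 0"
    using assms[OF i(1)] states_memD[OF zw(1) i(1)] states_memD[OF zw(2) i(1)]
    by (simp add: is_diag_on_def)
  with i(1) show "kron n Ms z w = 0" by (rule kron_eq_0)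
qed

lemma prob_measure_on_tensor:
  assumes "\<And>i. i \<in> {1..n} \<Longrightarrow> prob_measure_on {..<m i} (s i)"
  shows "prob_measure_on (states n m) (\<lambda>z. \<Prod>i\<in>{1..n}. s i (z i))"
  unfolding prob_measure_on_def
proof
  show "\<forall>z\<in>states n m. 0 \<le> (\<Prod>i\<in>{1..n}. s i (z i))"
    using assms by (auto simp: prob_measure_on_def intro!: prod_nonneg dest: states_memD)
  have "(\<Sum>z\<in>states n m. \<Prod>i\<in>{1..n}. s i (z i)) = (\<Prod>i\<in>{1..n}. \<Sum>a<m i. s i a)"
    by (rule sum_states_prod)
  also have "\<dots> = 1"
    using assms by (intro prod.neutral) (simp add: prob_measure_on_def)
  finally show "(\<Sum>z\<in>states n m. \<Prod>i\<in>{1..n}. s i (z i)) = 1" .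
qed

lemma detailed_balance_kron:
  assumes "\<And>i. i \<in> {1..n} \<Longrightarrow> detailed_balance {..<m i} (s i) (Ms i)"
  shows "detailed_balance (states n m) (\<lambda>z. \<Prod>i\<in>{1..n}. s i (z i)) (kron n Ms)"
  unfolding detailed_balance_def kron_def prod.distrib[symmetric]
proof (intro ballI prod.cong refl)
  fix x y i assume "x \<in> states n m" "y \<in> states n m" "i \<in> {1..n}"
  then show "s i (x i) * Ms i (x i) (y i) = s i (y i) * Ms i (y i) (x i)"
    using assms by (simp add: detailed_balance_def states_memD)
qed

section \<open>The eigenbasis of the first crested product\<close>

locale crested_eigenbasis =
  fixes n :: nat and m :: "nat \<Rightarrow> nat"
    and P U Delta :: "nat \<Rightarrow> nat rmat" and sigma :: "nat \<Rightarrow> nat \<Rightarrow> real"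
    and C N :: "nat set" and p0 :: "nat \<Rightarrow> real"
  assumes stoch: "\<forall>i\<in>{1..n}. stochastic {..<m i} (P i)"
    and irred: "\<forall>i\<in>{1..n}. irreducible_mat {..<m i} (P i)"
    and sig_pos: "\<forall>i\<in>{1..n}. \<forall>x<m i. sigma i x > 0"
    and sig_prob: "\<forall>i\<in>{1..n}. prob_measure_on {..<m i} (sigma i)"
    and db: "\<forall>i\<in>{1..n}. detailed_balance {..<m i} (sigma i) (P i)"
    and CN_union: "C \<union> N = {1..n}" and CN_disj: "C \<inter> N = {}"
    and N_ne: "N \<noteq> {}"
    and symm: "\<forall>k\<in>{Min N<..n}. \<forall>x<m k. \<forall>y<m k. P k x y = P k y x"
    and Delta_diag: "\<forall>i\<in>{1..n}. is_diag_on {..<m i} (Delta i)"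
    and eig: "\<forall>i\<in>{1..n}. mat_eq_on {..<m i} (mmult {..<m i} (P i) (U i))
                                               (mmult {..<m i} (U i) (Delta i))"
    and orth: "\<forall>i\<in>{1..n}. mat_eq_on {..<m i}
                 (mmult {..<m i} (mmult {..<m i} (mtrans (U i)) (diagm (sigma i))) (U i)) idm"
    and col0: "\<forall>i\<in>{1..n}. \<forall>x<m i. U i x 0 = 1"
begin

abbreviation S :: "(nat \<Rightarrow> nat) set" where "S \<equiv> states n m"

definition i1 :: nat where "i1 = Min N"

definition M :: "nat \<Rightarrow> nat rmat" where
  "M j = (if j \<in> N then signorm (sigma j) else U j)"

definition P_C :: "nat \<Rightarrow> (nat \<Rightarrow> nat) rmat" where
  "P_C i = kron n (\<lambda>j. if j = i then P i else idm)"

definition P_N :: "nat \<Rightarrow> (nat \<Rightarrow> nat) rmat" where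
  "P_N i = kron n (\<lambda>j. if j < i then idm else if j = i then P i else Jmat (m j))"

definition P_crest :: "(nat \<Rightarrow> nat) rmat" where
  "P_crest = crested1 n m C N p0 P"

definition Delta_C :: "nat \<Rightarrow> (nat \<Rightarrow> nat) rmat" where
  "Delta_C i = kron n (\<lambda>j. if j = i then Delta i else idm)"

definition Delta_N :: "nat \<Rightarrow> (nat \<Rightarrow> nat) rmat" where
  "Delta_N i = kron n (\<lambda>j. if j < i then idm else if j = i then Delta i else Jdiag)"

definition Delta_crest :: "(nat \<Rightarrow> nat) rmat" where
  "Delta_crest = (\<lambda>x y. (\<Sum>i\<in>C. p0 i * Delta_C i x y) + (\<Sum>i\<in>N. p0 i * Delta_N i x y))"

definition U_summand :: "nat \<Rightarrow> (nat \<Rightarrow> nat) rmat" where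
  "U_summand k = kron n (\<lambda>j. if j < k then M j
                              else if j = k then (\<lambda>a b. U k a b - Amat a b) else Amat)"

definition U_base :: "(nat \<Rightarrow> nat) rmat" where
  "U_base = kron n (\<lambda>j. if j \<le> i1 then U j else Amat)"

definition U_crest :: "(nat \<Rightarrow> nat) rmat" where
  "U_crest = (\<lambda>x y. (\<Sum>k\<in>{i1<..n}. U_summand k x y) + U_base x y)"

definition sigma_prod :: "(nat \<Rightarrow> nat) \<Rightarrow> real" where
  "sigma_prod = (\<lambda>z. \<Prod>j\<in>{1..n}. sigma j (z j))"

definition D_crest :: "(nat \<Rightarrow> nat) rmat" where
  "D_crest = kron n (\<lambda>i. diagm (sigma i))"

lemma P_crest_eq: "P_crest x z = (\<Sum>i\<in>C. p0 i * P_C i x z) + (\<Sum>i\<in>N. p0 i * P_N i x z)"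
  by (simp add: P_crest_def crested1_def P_C_def P_N_def)

lemma finite_N: "finite N"
  using CN_union by (metis finite_Un finite_atLeastAtMost)

lemma i1_in_N: "i1 \<in> N"
  unfolding i1_def using finite_N N_ne by simp

lemma i1_range: "i1 \<in> {1..n}"
  using i1_in_N CN_union by auto

lemma i1_le: "i \<in> N \<Longrightarrow> i1 \<le> i"
  unfolding i1_def using finite_N by simp

lemma not_in_N_if_less_i1: "j < i1 \<Longrightarrow> j \<notin> N"
  using i1_le by fastforce

lemma sigma_uniform:
  assumes "k \<in> {i1<..n}" "x < m k"
  shows "sigma k x = 1 / m k"
proof -
  have k: "k \<in> {1..n}"
    using assms(1) i1_range by auto
  then have "sigma k x = 1 / card {..<m k}"
    using assms stoch irred db sig_prob symm
    by (intro symmetric_detailed_balance_uniform[of "{..<m k}" "P k"]) (auto simp: i1_def)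
  then show ?thesis by simp
qed

lemma orthonormal_cols_U: "i \<in> {1..n} \<Longrightarrow> orthonormal_cols {..<m i} (sigma i) (U i)"
  using orth gram_eq_idm_iff_orthonormal_cols[of "{..<m i}" "diagm (sigma i)" "sigma i" "U i"]
  by (simp add: mat_eq_on_def)

lemma orthonormal_cols_M: "i \<in> {1..n} \<Longrightarrow> orthonormal_cols {..<m i} (sigma i) (M i)"
  using orthonormal_cols_U orthonormal_cols_signorm[of "{..<m i}" "sigma i"] sig_pos
  by (simp add: M_def)

lemma U_col_sum_eq_0:
  assumes "k \<in> {i1<..n}" "b < m k" "b \<noteq> 0"
  shows "(\<Sum>a<m k. U k a b) = 0"
  using assms i1_range col0 sigma_uniform orthonormal_cols_U[of k]
  by (intro orthonormal_cols_uniform_col_sum_eq_0[of "{..<m k}" "sigma k" "U k" 0]) auto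

lemma U_eigencol:
  assumes "i \<in> {1..n}" "x < m i" "b < m i"
  shows "(\<Sum>a<m i. P i x a * U i a b) = U i x b * Delta i b b"
proof -
  have "mmult {..<m i} (P i) (U i) x b = mmult {..<m i} (U i) (Delta i) x b"
    using eig assms by (simp add: mat_eq_on_def)
  also have "\<dots> = U i x b * Delta i b b"
    using Delta_diag assms by (intro mmult_diag_right) auto
  finally show ?thesis by (simp add: mmult_def)
qed

definition last_nz :: "(nat \<Rightarrow> nat) \<Rightarrow> nat" where
  "last_nz y = Max (insert i1 {j \<in> {i1<..n}. y j \<noteq> 0})"

definition col_factor :: "(nat \<Rightarrow> nat) \<Rightarrow> nat \<Rightarrow> nat \<Rightarrow> real" where
  "col_factor y j = (if j < last_nz y then (\<lambda>a. M j a (y j))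
                     else if j = last_nz y then (\<lambda>a. U j a (y j)) else (\<lambda>_. 1))"

definition col_tensor :: "(nat \<Rightarrow> nat) \<Rightarrow> (nat \<Rightarrow> nat) \<Rightarrow> real" where
  "col_tensor y = (\<lambda>z. \<Prod>j\<in>{1..n}. col_factor y j (z j))"

lemma last_nz_ge: "i1 \<le> last_nz y"
  unfolding last_nz_def by (intro Max_ge) auto

lemma last_nz_le: "last_nz y \<le> n"
  unfolding last_nz_def using i1_range by (subst Max_le_iff) auto

lemma last_nz_range: "last_nz y \<in> {1..n}"
  using last_nz_ge[of y] last_nz_le[of y] i1_range by auto

lemma eq_0_if_last_nz_less:
  assumes "j \<le> n" "last_nz y < j"
  shows "y j = 0"
proof (rule ccontr)
  assume "y j \<noteq> 0"
  with assms last_nz_ge[of y] have "j \<in> insert i1 {j \<in> {i1<..n}. y j \<noteq> 0}"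
    by auto
  then have "j \<le> last_nz y"
    unfolding last_nz_def by (intro Max_ge) auto
  with assms(2) show False by simp
qed

lemma last_nz_neq_0: "i1 < last_nz y \<Longrightarrow> y (last_nz y) \<noteq> 0"
  using Max_in[of "insert i1 {j \<in> {i1<..n}. y j \<noteq> 0}"] unfolding last_nz_def by auto

lemma col_factor_eq_U_col:
  assumes "j \<in> {1..n}" "\<not> (j < last_nz y \<and> j \<in> N)" "a < m j"
  shows "col_factor y j a = U j a (y j)"
  using assms col0 eq_0_if_last_nz_less[of j y] by (auto simp: col_factor_def M_def)

lemma U_summand_eq_0:
  assumes z: "z \<in> S" and k: "k \<in> {i1<..n}" "k \<noteq> last_nz y"
  shows "U_summand k z y = 0"
proof (cases "k < last_nz y")
  case True
  then show ?thesis
    unfolding U_summand_def using k last_nz_neq_0[of y] last_nz_range[of y]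
    by (intro kron_eq_0[of "last_nz y"]) (auto simp: Amat_def)
next
  case False
  then have "y k = 0"
    using k eq_0_if_last_nz_less[of k y] by auto
  then show ?thesis
    unfolding U_summand_def using k i1_range col0 states_memD[OF z, of k]
    by (intro kron_eq_0[of k]) (auto simp: Amat_def)
qed

lemma U_crest_col:
  assumes y: "y \<in> S" and z: "z \<in> S"
  shows "U_crest z y = col_tensor y z"
proof (cases "i1 < last_nz y")
  case True
  have "(\<Sum>k\<in>{i1<..n}. U_summand k z y) = U_summand (last_nz y) z y"
    using True last_nz_le[of y] U_summand_eq_0[OF z] by (intro sum_eq_single) auto
  also have "\<dots> = col_tensor y z"
    unfolding U_summand_def kron_def col_tensor_def
    using last_nz_neq_0[OF True] eq_0_if_last_nz_less[of _ y]
    by (intro prod.cong) (auto simp: col_factor_def Amat_def)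
  finally show ?thesis
    using True last_nz_neq_0[OF True] last_nz_range[of y]
    by (simp add: U_crest_def U_base_def kron_eq_0[of "last_nz y"] Amat_def)
next
  case False
  then have L: "last_nz y = i1"
    using last_nz_ge[of y] by simp
  have "(\<Sum>k\<in>{i1<..n}. U_summand k z y) = 0"
    using L U_summand_eq_0[OF z] by (intro sum.neutral) auto
  moreover have "U_base z y = col_tensor y z"
    unfolding U_base_def kron_def col_tensor_def
    using L not_in_N_if_less_i1 eq_0_if_last_nz_less[of _ y]
    by (intro prod.cong) (auto simp: col_factor_def M_def Amat_def)
  ultimately show ?thesis
    by (simp add: U_crest_def)
qed

lemma prod_inner_col_factors_eq_0:
  assumes y': "y' \<in> S" and less: "last_nz y < last_nz y'"
  shows "(\<Prod>j\<in>{1..n}. weighted_inner {..<m j} (sigma j) (col_factor y j) (col_factor y' j)) = 0"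
proof (rule prod_zero)
  let ?k = "last_nz y'"
  have k: "?k \<in> {1..n}" "y' ?k \<noteq> 0" "y' ?k < m ?k"
    using last_nz_range[of y'] last_nz_neq_0[of y'] last_nz_ge[of y] less states_memD[OF y']
    by auto
  have "weighted_inner {..<m ?k} (sigma ?k) (col_factor y ?k) (col_factor y' ?k)
      = weighted_inner {..<m ?k} (sigma ?k) (\<lambda>a. U ?k a (y' ?k)) (\<lambda>_. 1)"
    using less by (simp add: col_factor_def weighted_inner_commute)
  also have "\<dots> = 0"
    using k col0 orthonormal_cols_U
    by (subst orthonormal_cols_inner_const[where c = 0]) (auto simp: idm_def)
  finally show "\<exists>j\<in>{1..n}. weighted_inner {..<m j} (sigma j) (col_factor y j) (col_factor y' j) = 0"
    using k(1) by blast
qed (simp)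

lemma inner_col_factor_same_last_nz:
  assumes y: "y \<in> S" and y': "y' \<in> S" and same: "last_nz y = last_nz y'" and j: "j \<in> {1..n}"
  shows "weighted_inner {..<m j} (sigma j) (col_factor y j) (col_factor y' j) = idm (y j) (y' j)"
proof -
  have b: "y j < m j" "y' j < m j"
    using states_memD y y' j by auto
  consider "j < last_nz y" | "j = last_nz y" | "last_nz y < j"
    by linarith
  then show ?thesis
  proof cases
    case 1
    then show ?thesis
      using same b orthonormal_cols_M[OF j] by (simp add: col_factor_def orthonormal_cols_def)
  next
    case 2
    then show ?thesis
      using same b orthonormal_cols_U[OF j] by (simp add: col_factor_def orthonormal_cols_def)
  next
    case 3
    then show ?thesis
      using same j sig_prob eq_0_if_last_nz_less[of j y] eq_0_if_last_nz_less[of j y']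
      by (simp add: col_factor_def weighted_inner_const_const idm_def)
  qed
qed

lemma prod_inner_col_factors:
  assumes y: "y \<in> S" and y': "y' \<in> S"
  shows "(\<Prod>j\<in>{1..n}. weighted_inner {..<m j} (sigma j) (col_factor y j) (col_factor y' j))
       = idm y y'"
proof -
  consider "last_nz y < last_nz y'" | "last_nz y' < last_nz y" | "last_nz y = last_nz y'"
    by linarith
  then show ?thesis
  proof cases
    case 1
    then show ?thesis
      using prod_inner_col_factors_eq_0[OF y'] by (auto simp: idm_def)
  next
    case 2
    have "(\<Prod>j\<in>{1..n}. weighted_inner {..<m j} (sigma j) (col_factor y j) (col_factor y' j))
        = (\<Prod>j\<in>{1..n}. weighted_inner {..<m j} (sigma j) (col_factor y' j) (col_factor y j))"
      by (intro prod.cong refl) (rule weighted_inner_commute)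
    with 2 show ?thesis
      using prod_inner_col_factors_eq_0[OF y] by (auto simp: idm_def)
  next
    case 3
    show ?thesis
    proof (cases "y = y'")
      case False
      with y y' obtain i where "i \<in> {1..n}" "y i \<noteq> y' i"
        by (rule states_neqE)
      with False show ?thesis
        using inner_col_factor_same_last_nz[OF y y' 3] by (auto simp: idm_def intro!: prod_zero)
    next
      case True
      then show ?thesis
        using inner_col_factor_same_last_nz[OF y y' 3] by (simp add: idm_def prod.neutral)
    qed
  qed
qed

lemma orthonormal_cols_U_crest: "orthonormal_cols S sigma_prod U_crest"
  unfolding orthonormal_cols_def
proof (intro ballI)
  fix y y' assume y: "y \<in> S" and y': "y' \<in> S"
  have "weighted_inner S sigma_prod (\<lambda>z. U_crest z y) (\<lambda>z. U_crest z y')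
      = weighted_inner S sigma_prod (col_tensor y) (col_tensor y')"
    unfolding weighted_inner_def using U_crest_col y y' by (intro sum.cong) auto
  also have "\<dots> = (\<Prod>j\<in>{1..n}. weighted_inner {..<m j} (sigma j) (col_factor y j) (col_factor y' j))"
    unfolding sigma_prod_def col_tensor_def by (rule weighted_inner_tensor)
  also have "\<dots> = idm y y'"
    using y y' by (rule prod_inner_col_factors)
  finally show "weighted_inner S sigma_prod (\<lambda>z. U_crest z y) (\<lambda>z. U_crest z y') = idm y y'" .
qed

lemma sum_P_col_factor:
  assumes "j \<in> {1..n}" "\<not> (j < last_nz y \<and> j \<in> N)" "x < m j" "y j < m j"
  shows "(\<Sum>a<m j. P j x a * col_factor y j a) = col_factor y j x * Delta j (y j) (y j)"
proof -
  have "(\<Sum>a<m j. P j x a * col_factor y j a) = (\<Sum>a<m j. P j x a * U j a (y j))"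
    using col_factor_eq_U_col assms by (intro sum.cong) auto
  also have "\<dots> = U j x (y j) * Delta j (y j) (y j)"
    using assms by (intro U_eigencol) auto
  finally show ?thesis
    using col_factor_eq_U_col assms by simp
qed

lemma P_C_col_tensor:
  assumes x: "x \<in> S" and y: "y \<in> S" and i: "i \<in> C"
  shows "(\<Sum>z\<in>S. P_C i x z * col_tensor y z) = col_tensor y x * Delta_C i y y"
proof -
  have "(\<Sum>z\<in>S. P_C i x z * col_tensor y z)
      = (\<Prod>j\<in>{1..n}. \<Sum>a<m j. (if j = i then P i else idm) (x j) a * col_factor y j a)"
    unfolding P_C_def col_tensor_def by (rule sum_kron_mult_tensor)
  also have "\<dots> = (\<Prod>j\<in>{1..n}. col_factor y j (x j) * (if j = i then Delta i else idm) (y j) (y j))"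
  proof (rule prod.cong[OF refl])
    fix j assume j: "j \<in> {1..n}"
    have b: "x j < m j" "y j < m j"
      using states_memD x y j by auto
    show "(\<Sum>a<m j. (if j = i then P i else idm) (x j) a * col_factor y j a)
        = col_factor y j (x j) * (if j = i then Delta i else idm) (y j) (y j)"
      using i CN_disj sum_P_col_factor[of j y "x j", OF j _ b] sum_idm_mult[of "{..<m j}" "x j"] b
      by (auto simp: idm_def)
  qed
  also have "\<dots> = col_tensor y x * Delta_C i y y"
    by (simp add: col_tensor_def Delta_C_def kron_def prod.distrib)
  finally show ?thesis .
qed

lemma P_N_col_tensor:
  assumes x: "x \<in> S" and y: "y \<in> S" and i: "i \<in> N"
  shows "(\<Sum>z\<in>S. P_N i x z * col_tensor y z) = col_tensor y x * Delta_N i y y"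
proof -
  let ?Q = "\<lambda>j. if j < i then idm else if j = i then P i else Jmat (m j)"
  let ?D = "\<lambda>j. if j < i then idm else if j = i then Delta i else Jdiag"
  have expand: "(\<Sum>z\<in>S. P_N i x z * col_tensor y z)
      = (\<Prod>j\<in>{1..n}. \<Sum>a<m j. ?Q j (x j) a * col_factor y j a)"
    unfolding P_N_def col_tensor_def by (rule sum_kron_mult_tensor)
  show ?thesis
  proof (cases "i < last_nz y")
    case True
    let ?L = "last_nz y"
    have L: "?L \<in> {i1<..n}" "?L \<in> {1..n}" "y ?L \<noteq> 0" "y ?L < m ?L"
      using True i1_le[OF i] last_nz_le[of y] last_nz_range[of y] last_nz_neq_0[of y]
        states_memD[OF y]
      by auto
    have "(\<Sum>a<m ?L. ?Q ?L (x ?L) a * col_factor y ?L a) = (\<Sum>a<m ?L. U ?L a (y ?L)) / m ?L"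
      using True by (simp add: Jmat_def col_factor_def sum_divide_distrib)
    also have "\<dots> = 0"
      using U_col_sum_eq_0 L by simp
    finally have "(\<Sum>z\<in>S. P_N i x z * col_tensor y z) = 0"
      unfolding expand by (intro prod_zero finite_atLeastAtMost bexI[OF _ L(2)])
    moreover have "Delta_N i y y = 0"
      unfolding Delta_N_def using True L by (intro kron_eq_0[of ?L]) (auto simp: Jdiag_def)
    ultimately show ?thesis
      by simp
  next
    case False
    have "(\<Prod>j\<in>{1..n}. \<Sum>a<m j. ?Q j (x j) a * col_factor y j a)
        = (\<Prod>j\<in>{1..n}. col_factor y j (x j) * ?D j (y j) (y j))"
    proof (rule prod.cong[OF refl])
      fix j assume j: "j \<in> {1..n}"
      have b: "x j < m j" "y j < m j"
        using states_memD x y j by auto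
      consider "j < i" | "j = i" | "i < j"
        by linarith
      then show "(\<Sum>a<m j. ?Q j (x j) a * col_factor y j a) = col_factor y j (x j) * ?D j (y j) (y j)"
      proof cases
        case 1
        then show ?thesis
          using sum_idm_mult[of "{..<m j}" "x j"] b by (simp add: idm_def)
      next
        case 2
        then show ?thesis
          using False sum_P_col_factor[of j y "x j", OF j _ b] by simp
      next
        case 3
        then have "y j = 0" "col_factor y j = (\<lambda>_. 1)"
          using False eq_0_if_last_nz_less[of j y] j by (auto simp: col_factor_def)
        then show ?thesis
          using 3 b by (simp add: Jmat_def Jdiag_def)
      qed
    qed
    then show ?thesis
      unfolding expand by (simp add: col_tensor_def Delta_N_def kron_def prod.distrib)
  qed
qed

lemma is_diag_on_Delta_crest: "is_diag_on S Delta_crest"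
  unfolding Delta_crest_def Delta_C_def Delta_N_def
  using Delta_diag
  by (intro is_diag_on_add is_diag_on_lincomb is_diag_on_kron)
    (auto simp: is_diag_on_idm is_diag_on_Jdiag)

lemma mmult_P_crest_U_crest:
  assumes x: "x \<in> S" and y: "y \<in> S"
  shows "mmult S P_crest U_crest x y = mmult S U_crest Delta_crest x y"
proof -
  have "mmult S P_crest U_crest x y = (\<Sum>z\<in>S. P_crest x z * col_tensor y z)"
    unfolding mmult_def using U_crest_col y by (intro sum.cong) auto
  also have "\<dots> = (\<Sum>i\<in>C. p0 i * (\<Sum>z\<in>S. P_C i x z * col_tensor y z))
                + (\<Sum>i\<in>N. p0 i * (\<Sum>z\<in>S. P_N i x z * col_tensor y z))"
    by (simp add: P_crest_eq distrib_right sum.distrib sum_distrib_left sum_distrib_right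
        mult.assoc sum.swap[of _ S])
  also have "\<dots> = col_tensor y x * Delta_crest y y"
    using P_C_col_tensor[OF x y] P_N_col_tensor[OF x y]
    by (simp add: Delta_crest_def distrib_left sum_distrib_left mult_ac)
  also have "\<dots> = mmult S U_crest Delta_crest x y"
    using U_crest_col[OF y x] is_diag_on_Delta_crest y
    by (simp add: mmult_diag_right finite_states)
  finally show ?thesis .
qed

lemma detailed_balance_P_crest: "detailed_balance S sigma_prod P_crest"
  unfolding P_crest_def crested1_def sigma_prod_def
proof (intro detailed_balance_add detailed_balance_lincomb detailed_balance_kron)
  fix i j assume "i \<in> C" "j \<in> {1..n}"
  then show "detailed_balance {..<m j} (sigma j) (if j = i then P i else idm)"
    using db by (simp add: detailed_balance_idm)
next
  fix i j assume i: "i \<in> N" and j: "j \<in> {1..n}"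
  consider "j < i" | "j = i" | "i < j"
    by linarith
  then show "detailed_balance {..<m j} (sigma j)
               (if j < i then idm else if j = i then P i else Jmat (m j))"
  proof cases
    case 3
    then have "j \<in> {i1<..n}"
      using i1_le[OF i] j by auto
    with 3 show ?thesis
      by (auto intro!: detailed_balance_Jmat simp: sigma_uniform)
  qed (use db j in \<open>auto simp: detailed_balance_idm\<close>)
qed

lemma spectral_decomposition:
  "(\<exists>s. mat_eq_on S D_crest (diagm s) \<and> prob_measure_on S s \<and> detailed_balance S s P_crest)
   \<and> is_diag_on S Delta_crest
   \<and> mat_eq_on S (mmult S P_crest U_crest) (mmult S U_crest Delta_crest)
   \<and> mat_eq_on S (mmult S (mmult S (mtrans U_crest) D_crest) U_crest) idm"
proof (intro conjI exI)
  show D_crest: "mat_eq_on S D_crest (diagm sigma_prod)"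
    unfolding D_crest_def sigma_prod_def by (rule kron_diagm)
  show "prob_measure_on S sigma_prod"
    unfolding sigma_prod_def using sig_prob by (intro prob_measure_on_tensor) auto
  show "detailed_balance S sigma_prod P_crest"
    by (rule detailed_balance_P_crest)
  show "is_diag_on S Delta_crest"
    by (rule is_diag_on_Delta_crest)
  show "mat_eq_on S (mmult S P_crest U_crest) (mmult S U_crest Delta_crest)"
    using mmult_P_crest_U_crest by (simp add: mat_eq_on_def)
  show "mat_eq_on S (mmult S (mmult S (mtrans U_crest) D_crest) U_crest) idm"
    using gram_eq_idm_iff_orthonormal_cols[OF finite_states D_crest] orthonormal_cols_U_crest
    by simp
qed

end

theorem proposition4p5:
  fixes n :: nat and m :: "nat \<Rightarrow> nat"
    and P U Delta :: "nat \<Rightarrow> nat rmat" and sigma :: "nat \<Rightarrow> nat \<Rightarrow> real"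
    and C N :: "nat set" and p0 :: "nat \<Rightarrow> real"
  assumes m_pos: "\<forall>i\<in>{1..n}. m i \<ge> 1"
    and stoch: "\<forall>i\<in>{1..n}. stochastic {..<m i} (P i)"
    and irred: "\<forall>i\<in>{1..n}. irreducible_mat {..<m i} (P i)"
    and sig_pos: "\<forall>i\<in>{1..n}. \<forall>x<m i. sigma i x > 0"
    and sig_prob: "\<forall>i\<in>{1..n}. prob_measure_on {..<m i} (sigma i)"
    and db: "\<forall>i\<in>{1..n}. detailed_balance {..<m i} (sigma i) (P i)"
    and CN_union: "C \<union> N = {1..n}" and CN_disj: "C \<inter> N = {}"
    and N_ne: "N \<noteq> {}"
    and p0_pos: "\<forall>i\<in>{1..n}. p0 i > 0" and p0_sum: "(\<Sum>i\<in>{1..n}. p0 i) = 1"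
    and symm: "\<forall>k\<in>{Min N<..n}. \<forall>x<m k. \<forall>y<m k. P k x y = P k y x"
    and Delta_diag: "\<forall>i\<in>{1..n}. is_diag_on {..<m i} (Delta i)"
    and eig: "\<forall>i\<in>{1..n}. mat_eq_on {..<m i} (mmult {..<m i} (P i) (U i))
                                               (mmult {..<m i} (U i) (Delta i))"
    and orth: "\<forall>i\<in>{1..n}. mat_eq_on {..<m i}
                 (mmult {..<m i} (mmult {..<m i} (mtrans (U i)) (diagm (sigma i))) (U i)) idm"
    and col0: "\<forall>i\<in>{1..n}. \<forall>x<m i. U i x 0 = 1"
    and Delta00: "\<forall>i\<in>{1..n}. Delta i 0 0 = 1"
  shows
    "let S = states n m;
         i1 = Min N;
         Pc = crested1 n m C N p0 P;
         M = (\<lambda>i. if i \<in> N then signorm (sigma i) else U i);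
         UU = (\<lambda>x y. (\<Sum>k\<in>{i1<..n}.
                 kron n (\<lambda>j. if j < k then M j
                              else if j = k then (\<lambda>a b. U k a b - Amat a b)
                              else Amat) x y)
               + kron n (\<lambda>j. if j \<le> i1 then U j else Amat) x y);
         DD = kron n (\<lambda>i. diagm (sigma i));
         DDelta = (\<lambda>x y.
               (\<Sum>i\<in>C. p0 i * kron n (\<lambda>j. if j = i then Delta i else idm) x y)
             + (\<Sum>i\<in>N. p0 i * kron n (\<lambda>j. if j < i then idm
                                               else if j = i then Delta i else Jdiag) x y))
     in (\<exists>s. mat_eq_on S DD (diagm s) \<and> prob_measure_on S s \<and> detailed_balance S s Pc)
        \<and> is_diag_on S DDelta
        \<and> mat_eq_on S (mmult S Pc UU) (mmult S UU DDelta)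
        \<and> mat_eq_on S (mmult S (mmult S (mtrans UU) DD) UU) idm"
proof -
  interpret crested_eigenbasis n m P U Delta sigma C N p0
    using assms by unfold_locales auto
  show ?thesis
    using spectral_decomposition
    unfolding Let_def P_crest_def U_crest_def U_summand_def U_base_def M_def D_crest_def
      Delta_crest_def Delta_C_def Delta_N_def i1_def .
qed

end
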